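(* Let $n\ge2$, $T\ge2$, $G=([T],\mathcal{E})$ a connected undirected graph with incidence matrix $D$ (any orientation) and $M=D\otimes I_n$. For each $t\in[T]$ let $G_t=([n],\mathcal{E}_t)$ be an undirected graph and $C_t\in\{-1,1,0\}^{|\mathcal{E}_t|\times n}$ the incidence matrix of some orientation of its edges; let $C=\mathrm{blockdiag}(C_1,\dots,C_T)$ and $O_T=[C_1^\top\ \cdots\ C_T^\top]^\top$. Let $P=I_T\otimes(I_n-\frac1n\mathbf{1}_n\mathbf{1}_n^\top)$. If $\mu>0$ and $\mathrm{rank}(O_T)=n-1$, then $\mathrm{null}(\mu M^\top M+C^\top C)=\mathrm{span}(\mathbf{1}_{nT})$. Consequently, the column space of $P$ is contained in the column space of $\mu M^\top M+C^\top C$.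
   Context: $\mathbf{1}_k$ denotes the all-ones vector in $\mathbb{R}^k$; $\otimes$ is the Kronecker product. *)

theory Defs
  imports "Jordan_Normal_Form.DL_Rank" "Jordan_Normal_Form.Matrix_Kernel"
begin

text \<open>An undirected simple graph on vertex set [N] = {0..<N} with a chosen orientation:
  a list of oriented edges (a,b), a \<noteq> b, no undirected edge repeated.\<close>
definition oriented_simple_graph :: "nat \<Rightarrow> (nat \<times> nat) list \<Rightarrow> bool" where
  "oriented_simple_graph N Es \<longleftrightarrow>
     (\<forall>(a,b) \<in> set Es. a < N \<and> b < N \<and> a \<noteq> b) \<and>
     distinct (map (\<lambda>(a,b). {a,b}) Es)"

definition undirected_adj :: "(nat \<times> nat) list \<Rightarrow> (nat \<times> nat) set" where
  "undirected_adj Es = set Es \<union> (set Es)\<inverse>"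

definition graph_connected :: "nat \<Rightarrow> (nat \<times> nat) list \<Rightarrow> bool" where
  "graph_connected N Es \<longleftrightarrow> (\<forall>u<N. \<forall>v<N. (u,v) \<in> (undirected_adj Es)\<^sup>*)"

definition incidence_mat :: "nat \<Rightarrow> (nat \<times> nat) list \<Rightarrow> real mat" where
  "incidence_mat N Es = mat (length Es) N (\<lambda>(e,v).
      if v = fst (Es ! e) then 1 else if v = snd (Es ! e) then -1 else 0)"

definition kron :: "'a::semiring_0 mat \<Rightarrow> 'a mat \<Rightarrow> 'a mat" where
  "kron A B = mat (dim_row A * dim_row B) (dim_col A * dim_col B)
     (\<lambda>(i,j). A $$ (i div dim_row B, j div dim_col B) * B $$ (i mod dim_row B, j mod dim_col B))"

definition stack_rows :: "nat \<Rightarrow> real mat list \<Rightarrow> real mat" where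
  "stack_rows nc As = foldr (\<lambda>A B. A @\<^sub>r B) As (0\<^sub>m 0 nc)"

definition ones_vec :: "nat \<Rightarrow> real vec" where
  "ones_vec k = vec k (\<lambda>_. 1)"

definition ones_mat :: "nat \<Rightarrow> real mat" where
  "ones_mat k = mat k k (\<lambda>_. 1)"

definition col_space :: "real mat \<Rightarrow> real vec set" where
  "col_space A = {A *\<^sub>v x | x. x \<in> carrier_vec (dim_col A)}"

definition span_one :: "real vec \<Rightarrow> real vec set" where
  "span_one v = {c \<cdot>\<^sub>v v | c. True}"

end

theory Submission
  imports Defs
begin

text \<open>
  The matrix \<open>A = \<mu> M\<^sup>T M + C\<^sup>T C\<close> satisfies \<open>x\<^sup>T A x = \<mu> |M x|\<^sup>2 + |C x|\<^sup>2\<close>, so its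
  kernel is the common kernel of \<open>M\<close> and \<open>C\<close>. Since \<open>M = D \<otimes> I\<^sub>n\<close> and the graph is
  connected, \<open>M x = 0\<close> forces \<open>x\<close> to be block-constant, \<open>x = \<one>\<^sub>T \<otimes> y\<close>; then
  \<open>C x = O\<^sub>T y\<close>, and as \<open>O\<^sub>T \<one>\<^sub>n = 0\<close> and \<open>rank O\<^sub>T = n - 1\<close>, \<open>y\<close> is a multiple of
  \<open>\<one>\<^sub>n\<close>. For the column space: \<open>A\<close> is symmetric, so its column space is the orthogonal
  complement of its kernel, and every column of \<open>P\<close> sums to zero.
\<close>

lemma sum_lessThan_mult_blocks:
  fixes f :: "nat \<Rightarrow> 'a::comm_monoid_add"
  shows "(\<Sum>i<T * n. f i) = (\<Sum>s<T. \<Sum>k<n. f (s * n + k))"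
proof -
  have "(\<Sum>i<T * n. f i) = (\<Sum>s<T. sum f {s * n..<s * n + n})"
    by (rule sum.nat_group[symmetric])
  also have "\<dots> = (\<Sum>s<T. \<Sum>k<n. f (s * n + k))"
  proof (rule sum.cong[OF refl])
    fix s
    show "sum f {s * n..<s * n + n} = (\<Sum>k<n. f (s * n + k))"
      by (simp add: sum.atLeastLessThan_shift_0[of f] atLeast0LessThan comp_def)
  qed
  finally show ?thesis .
qed

lemma block_index_less:
  assumes "s < T" and "k < n"
  shows "s * n + k < T * (n::nat)"
proof -
  have "s * n + k < Suc s * n" using assms(2) by simp
  also have "\<dots> \<le> T * n" using assms(1) by (intro mult_le_mono1) simp
  finally show ?thesis .
qed

lemma ones_vec_carrier [simp]: "ones_vec n \<in> carrier_vec n"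
  unfolding ones_vec_def by simp

lemma ones_vec_neq_zero:
  assumes "0 < k"
  shows "ones_vec k \<noteq> 0\<^sub>v k"
proof
  assume "ones_vec k = 0\<^sub>v k"
  then have "ones_vec k $ 0 = 0\<^sub>v k $ 0" by simp
  with assms show False by (simp add: ones_vec_def)
qed

lemma ones_mat_carrier [simp]: "ones_mat n \<in> carrier_mat n n"
  unfolding ones_mat_def by simp

lemma oriented_simple_graph_edge:
  assumes "oriented_simple_graph N Es" and "(a, b) \<in> set Es"
  shows "a < N" and "b < N" and "a \<noteq> b"
  using assms unfolding oriented_simple_graph_def by auto

lemma dim_incidence_mat [simp]:
  "dim_row (incidence_mat N Es) = length Es" "dim_col (incidence_mat N Es) = N"
  unfolding incidence_mat_def by simp_all

lemma incidence_mat_carrier: "incidence_mat N Es \<in> carrier_mat (length Es) N"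
  by (rule carrier_matI) simp_all

lemma incidence_mat_mult_vec:
  assumes G: "oriented_simple_graph N Es" and e: "e < length Es" and x: "x \<in> carrier_vec N"
  shows "(incidence_mat N Es *\<^sub>v x) $ e = x $ fst (Es ! e) - x $ snd (Es ! e)"
proof -
  obtain a b where ab: "Es ! e = (a, b)" by fastforce
  with e have "(a, b) \<in> set Es" by (metis nth_mem)
  note edge = oriented_simple_graph_edge[OF G this]
  have "(incidence_mat N Es *\<^sub>v x) $ e
      = (\<Sum>j = 0..<N. (if j = a then x $ j else 0) - (if j = b then x $ j else 0))"
    using e x ab edge(3) unfolding incidence_mat_def
    by (auto simp: mult_mat_vec_def scalar_prod_def intro!: sum.cong)
  also have "\<dots> = x $ a - x $ b"
    using edge by (simp add: sum_subtractf)
  finally show ?thesis using ab by simp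
qed

lemma incidence_mat_mult_vec_eq_0_iff:
  assumes G: "oriented_simple_graph N Es" and x: "x \<in> carrier_vec N"
  shows "incidence_mat N Es *\<^sub>v x = 0\<^sub>v (length Es) \<longleftrightarrow> (\<forall>(a, b) \<in> set Es. x $ a = x $ b)"
proof -
  have "incidence_mat N Es *\<^sub>v x = 0\<^sub>v (length Es)
      \<longleftrightarrow> (\<forall>e < length Es. x $ fst (Es ! e) = x $ snd (Es ! e))"
    using incidence_mat_mult_vec[OF G _ x] incidence_mat_carrier[of N Es]
    by (auto simp: vec_eq_iff)
  also have "\<dots> \<longleftrightarrow> (\<forall>(a, b) \<in> set Es. x $ a = x $ b)"
    by (simp add: all_set_conv_all_nth case_prod_beta)
  finally show ?thesis .
qed

lemma incidence_mat_mult_ones: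
  assumes "oriented_simple_graph N Es"
  shows "incidence_mat N Es *\<^sub>v ones_vec N = 0\<^sub>v (length Es)"
  using assms oriented_simple_graph_edge[OF assms]
  by (auto simp: incidence_mat_mult_vec_eq_0_iff ones_vec_def)

lemma graph_connected_constant:
  assumes "graph_connected N Es" and "\<forall>(a, b) \<in> set Es. g a = g b" and "u < N" and "v < N"
  shows "g u = g v"
proof -
  have "(u, v) \<in> (undirected_adj Es)\<^sup>*"
    using assms(1,3,4) unfolding graph_connected_def by blast
  then show ?thesis
    by induction (use assms(2) in \<open>auto simp: undirected_adj_def\<close>)
qed

lemma dim_kron [simp]:
  "dim_row (kron A B) = dim_row A * dim_row B" "dim_col (kron A B) = dim_col A * dim_col B"
  unfolding kron_def by simp_all

lemma index_kron:
  assumes "i < dim_row A * dim_row B" and "j < dim_col A * dim_col B"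
  shows "kron A B $$ (i, j)
    = A $$ (i div dim_row B, j div dim_col B) * B $$ (i mod dim_row B, j mod dim_col B)"
  using assms unfolding kron_def by simp

lemma kron_one_mat_mult_vec:
  fixes D :: "'a::semiring_1 mat"
  assumes D: "D \<in> carrier_mat m T" and x: "x \<in> carrier_vec (T * n)"
    and e: "e < m" and k: "k < n"
  shows "(kron D (1\<^sub>m n) *\<^sub>v x) $ (e * n + k) = (D *\<^sub>v vec T (\<lambda>s. x $ (s * n + k))) $ e"
proof -
  have row: "e * n + k < m * n" by (rule block_index_less[OF e k])
  have entry: "kron D (1\<^sub>m n) $$ (e * n + k, s * n + l) = (if l = k then D $$ (e, s) else 0)"
    if "s < T" and "l < n" for s l
    using D row block_index_less[OF that] that k by (simp add: index_kron)
  have "(kron D (1\<^sub>m n) *\<^sub>v x) $ (e * n + k)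
      = (\<Sum>j<T * n. kron D (1\<^sub>m n) $$ (e * n + k, j) * x $ j)"
    using D x row by (simp add: scalar_prod_def atLeast0LessThan)
  also have "\<dots> = (\<Sum>s<T. \<Sum>l<n. kron D (1\<^sub>m n) $$ (e * n + k, s * n + l) * x $ (s * n + l))"
    by (rule sum_lessThan_mult_blocks)
  also have "\<dots> = (\<Sum>s<T. D $$ (e, s) * x $ (s * n + k))"
  proof (rule sum.cong[OF refl])
    fix s assume "s \<in> {..<T}"
    then have "(\<Sum>l<n. kron D (1\<^sub>m n) $$ (e * n + k, s * n + l) * x $ (s * n + l))
        = (\<Sum>l<n. if l = k then D $$ (e, s) * x $ (s * n + l) else 0)"
      by (intro sum.cong) (simp_all add: entry)
    then show "(\<Sum>l<n. kron D (1\<^sub>m n) $$ (e * n + k, s * n + l) * x $ (s * n + l))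
        = D $$ (e, s) * x $ (s * n + k)"
      using k by simp
  qed
  also have "\<dots> = (D *\<^sub>v vec T (\<lambda>s. x $ (s * n + k))) $ e"
    using D e by (simp add: mult_mat_vec_def scalar_prod_def atLeast0LessThan)
  finally show ?thesis .
qed

lemma kron_one_mat_mult_vec_eq_0_iff:
  fixes D :: "'a::semiring_1 mat"
  assumes D: "D \<in> carrier_mat m T" and x: "x \<in> carrier_vec (T * n)"
  shows "kron D (1\<^sub>m n) *\<^sub>v x = 0\<^sub>v (m * n)
    \<longleftrightarrow> (\<forall>k<n. D *\<^sub>v vec T (\<lambda>s. x $ (s * n + k)) = 0\<^sub>v m)"
proof -
  have "kron D (1\<^sub>m n) *\<^sub>v x = 0\<^sub>v (m * n)
      \<longleftrightarrow> (\<forall>e<m. \<forall>k<n. (kron D (1\<^sub>m n) *\<^sub>v x) $ (e * n + k) = 0)"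
  proof (intro iffI allI impI)
    fix e k assume "kron D (1\<^sub>m n) *\<^sub>v x = 0\<^sub>v (m * n)" and "e < m" and "k < n"
    then show "(kron D (1\<^sub>m n) *\<^sub>v x) $ (e * n + k) = 0"
      using block_index_less by simp
  next
    assume blocks: "\<forall>e<m. \<forall>k<n. (kron D (1\<^sub>m n) *\<^sub>v x) $ (e * n + k) = 0"
    show "kron D (1\<^sub>m n) *\<^sub>v x = 0\<^sub>v (m * n)"
    proof (rule eq_vecI)
      fix i assume "i < dim_vec (0\<^sub>v (m * n) :: 'a vec)"
      then have i: "i < m * n" by simp
      then have "0 < n" by (cases "n = 0") simp_all
      with i have "i div n < m" and "i mod n < n"
        by (auto simp: less_mult_imp_div_less)
      with blocks have "(kron D (1\<^sub>m n) *\<^sub>v x) $ (i div n * n + i mod n) = 0" by blast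
      with i show "(kron D (1\<^sub>m n) *\<^sub>v x) $ i = 0\<^sub>v (m * n) $ i" by simp
    qed (use D in \<open>simp add: kron_def\<close>)
  qed
  also have "\<dots> \<longleftrightarrow> (\<forall>k<n. D *\<^sub>v vec T (\<lambda>s. x $ (s * n + k)) = 0\<^sub>v m)"
    using D by (auto simp: kron_one_mat_mult_vec[OF D x] vec_eq_iff)
  finally show ?thesis .
qed

definition repeat_vec :: "nat \<Rightarrow> 'a vec \<Rightarrow> 'a vec" where
  "repeat_vec T y = vec (T * dim_vec y) (\<lambda>i. y $ (i mod dim_vec y))"

lemma repeat_vec_carrier [simp]: "y \<in> carrier_vec n \<Longrightarrow> repeat_vec T y \<in> carrier_vec (T * n)"
  unfolding repeat_vec_def by simp

lemma repeat_vec_Suc: "repeat_vec (Suc T) y = y @\<^sub>v repeat_vec T y"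
  unfolding repeat_vec_def
  by (rule eq_vecI) (auto simp: le_mod_geq)

lemma repeat_vec_smult: "repeat_vec T (c \<cdot>\<^sub>v y) = c \<cdot>\<^sub>v repeat_vec T y"
  unfolding repeat_vec_def
  by (rule eq_vecI; cases "dim_vec y = 0") simp_all

lemma repeat_vec_ones: "repeat_vec T (ones_vec n) = ones_vec (T * n)"
  unfolding repeat_vec_def ones_vec_def
  by (rule eq_vecI; cases "n = 0") simp_all

lemma kron_incidence_mat_kernel:
  assumes G: "oriented_simple_graph T Es" and conn: "graph_connected T Es"
    and x: "x \<in> carrier_vec (T * n)"
    and Mx: "kron (incidence_mat T Es) (1\<^sub>m n) *\<^sub>v x = 0\<^sub>v (length Es * n)"
  shows "x = repeat_vec T (vec n (\<lambda>k. x $ k))"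
proof (rule eq_vecI)
  fix i assume "i < dim_vec (repeat_vec T (vec n (\<lambda>k. x $ k)))"
  then have i: "i < T * n" by (simp add: repeat_vec_def)
  then have "0 < T * n" by linarith
  with i have s: "i div n < T" and k: "i mod n < n" and T: "0 < T"
    by (auto simp: less_mult_imp_div_less)
  have "incidence_mat T Es *\<^sub>v vec T (\<lambda>s. x $ (s * n + i mod n)) = 0\<^sub>v (length Es)"
    using Mx k kron_one_mat_mult_vec_eq_0_iff[OF incidence_mat_carrier x] by blast
  then have "\<forall>(a, b) \<in> set Es. x $ (a * n + i mod n) = x $ (b * n + i mod n)"
    using oriented_simple_graph_edge[OF G]
    by (auto simp: incidence_mat_mult_vec_eq_0_iff[OF G])
  then have "x $ (i div n * n + i mod n) = x $ (0 * n + i mod n)"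
    by (rule graph_connected_constant[OF conn _ s T])
  then show "x $ i = repeat_vec T (vec n (\<lambda>k. x $ k)) $ i"
    using i k by (simp add: repeat_vec_def)
qed (use x in \<open>simp add: repeat_vec_def\<close>)

lemma kron_incidence_mat_mult_ones:
  assumes "oriented_simple_graph T Es"
  shows "kron (incidence_mat T Es) (1\<^sub>m n) *\<^sub>v ones_vec (T * n) = 0\<^sub>v (length Es * n)"
proof -
  have "vec T (\<lambda>s. ones_vec (T * n) $ (s * n + k)) = ones_vec T" if "k < n" for k
    using block_index_less[OF _ that] by (auto simp: ones_vec_def intro!: eq_vecI)
  then show ?thesis
    using assms by (simp add: kron_one_mat_mult_vec_eq_0_iff[OF incidence_mat_carrier]
        incidence_mat_mult_ones)
qed

lemma stack_rows_Cons: "stack_rows n (A # As) = A @\<^sub>r stack_rows n As"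
  unfolding stack_rows_def by simp

lemma stack_rows_carrier:
  assumes "\<forall>A \<in> set As. dim_col A = n"
  shows "stack_rows n As \<in> carrier_mat (sum_list (map dim_row As)) n"
  using assms
proof (induction As)
  case Nil
  then show ?case by (simp add: stack_rows_def)
next
  case (Cons A As)
  have A: "A \<in> carrier_mat (dim_row A) n" using Cons.prems by (intro carrier_matI) simp_all
  have "stack_rows n As \<in> carrier_mat (sum_list (map dim_row As)) n" using Cons by simp
  from carrier_append_rows[OF A this] show ?case by (simp add: stack_rows_Cons)
qed

lemma stack_rows_Cons_mult_vec:
  assumes "\<forall>B \<in> set (A # As). dim_col B = n" and y: "y \<in> carrier_vec n"
  shows "stack_rows n (A # As) *\<^sub>v y = (A *\<^sub>v y) @\<^sub>v (stack_rows n As *\<^sub>v y)"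
proof -
  have "A \<in> carrier_mat (dim_row A) n" using assms(1) by (intro carrier_matI) simp_all
  with stack_rows_carrier[of As n] assms(1) show ?thesis
    unfolding stack_rows_Cons by (simp add: mat_mult_append[OF _ _ y])
qed

lemma stack_rows_mult_vec_eq_0:
  assumes "\<forall>A \<in> set As. dim_col A = n \<and> A *\<^sub>v y = 0\<^sub>v (dim_row A)" and y: "y \<in> carrier_vec n"
  shows "stack_rows n As *\<^sub>v y = 0\<^sub>v (sum_list (map dim_row As))"
  using assms(1)
proof (induction As)
  case Nil
  show ?case by (auto simp: stack_rows_def intro!: eq_vecI)
next
  case (Cons A As)
  then show ?case
    by (auto simp: stack_rows_Cons_mult_vec[OF _ y] intro!: eq_vecI)
qed

lemma dim_col_diag_block_mat:
  assumes "\<forall>A \<in> set As. dim_col A = n"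
  shows "dim_col (diag_block_mat As) = length As * n"
  using assms by (induction As) (auto simp: Let_def)

lemma diag_block_mat_mult_repeat_vec:
  assumes "\<forall>A \<in> set As. dim_col A = n" and y: "y \<in> carrier_vec n"
  shows "diag_block_mat As *\<^sub>v repeat_vec (length As) y = stack_rows n As *\<^sub>v y"
  using assms(1)
proof (induction As)
  case Nil
  show ?case by (auto simp: stack_rows_def repeat_vec_def intro!: eq_vecI)
next
  case (Cons A As)
  define B where "B = diag_block_mat As"
  define r where "r = repeat_vec (length As) y"
  have A: "A \<in> carrier_mat (dim_row A) n" using Cons.prems by (intro carrier_matI) simp_all
  have B: "B \<in> carrier_mat (sum_list (map dim_row As)) (length As * n)"
    using Cons.prems unfolding B_def
    by (intro carrier_matI) (simp_all add: dim_diag_block_mat(1) dim_col_diag_block_mat)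
  have r: "r \<in> carrier_vec (length As * n)" unfolding r_def using y by simp
  have "diag_block_mat (A # As)
      = four_block_mat A (0\<^sub>m (dim_row A) (length As * n)) (0\<^sub>m (sum_list (map dim_row As)) n) B"
    using Cons.prems carrier_matD[OF B] by (simp add: B_def Let_def)
  moreover have "repeat_vec (length (A # As)) y = y @\<^sub>v r" by (simp add: r_def repeat_vec_Suc)
  ultimately have "diag_block_mat (A # As) *\<^sub>v repeat_vec (length (A # As)) y
      = (A *\<^sub>v y + 0\<^sub>m (dim_row A) (length As * n) *\<^sub>v r)
        @\<^sub>v (0\<^sub>m (sum_list (map dim_row As)) n *\<^sub>v y + B *\<^sub>v r)"
    using four_block_mat_mult_vec[OF A zero_carrier_mat zero_carrier_mat B y r] by simp
  also have "\<dots> = (A *\<^sub>v y) @\<^sub>v (B *\<^sub>v r)"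
    using mult_mat_vec_carrier[OF A y] mult_mat_vec_carrier[OF B r] carrier_matD[OF B] y r
    by (intro arg_cong2[where f = append_vec]) (auto intro!: eq_vecI)
  also have "\<dots> = stack_rows n (A # As) *\<^sub>v y"
    using Cons by (simp add: B_def r_def stack_rows_Cons_mult_vec[OF _ y])
  finally show ?case .
qed

lemma mult_mat_vec_linear_map:
  fixes A :: "'a::field mat"
  assumes A: "A \<in> carrier_mat nr nc"
  shows "linear_map class_ring (module_vec TYPE('a) nc) (module_vec TYPE('a) nr) ((*\<^sub>v) A)"
proof -
  interpret V: vec_space "TYPE('a)" nc .
  interpret W: vec_space "TYPE('a)" nr .
  show ?thesis
    unfolding linear_map_def
  proof (intro conjI mod_hom.intro)
    show "mod_hom_axioms class_ring (module_vec TYPE('a) nc) (module_vec TYPE('a) nr) ((*\<^sub>v) A)"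
      unfolding mod_hom_axioms_def LinearCombinations.module_hom_def
      using A by (auto simp: module_vec_simps mult_add_distrib_mat_vec mult_mat_vec)
  qed (fact V.vectorspace_axioms W.vectorspace_axioms V.module_axioms W.module_axioms)+
qed

lemma rank_plus_kernel_dim:
  fixes A :: "'a::field mat"
  assumes A: "A \<in> carrier_mat nr nc"
  shows "vec_space.rank nr A + kernel_dim A = nc"
proof -
  interpret V: vec_space "TYPE('a)" nc .
  interpret W: vec_space "TYPE('a)" nr .
  interpret L: linear_map class_ring "module_vec TYPE('a) nc" "module_vec TYPE('a) nr" "(*\<^sub>v) A"
    by (rule mult_mat_vec_linear_map[OF A])
  interpret K: kernel nr nc A by unfold_locales (rule A)
  have "L.imT = W.span (set (cols A))"
    using W.col_space_eq[OF A] A unfolding W.col_space_def L.im_def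
    by (auto simp: module_vec_simps)
  moreover have "L.kerT = mat_kernel A"
    using A unfolding L.ker_def mat_kernel_def by (auto simp: module_vec_simps)
  ultimately show ?thesis
    using L.rank_nullity_main(1)[OF V.fin_dim] V.dim_is_n unfolding W.rank_def by simp
qed

lemma span_one_self: "v \<in> span_one v"
  unfolding span_one_def by (metis (mono_tags) mem_Collect_eq scalar_vec_one)

lemma mat_kernel_eq_span_one:
  fixes A :: "real mat"
  assumes A: "A \<in> carrier_mat nr nc" and dim: "kernel_dim A = 1"
    and v: "v \<in> mat_kernel A" and v0: "v \<noteq> 0\<^sub>v nc"
  shows "mat_kernel A = span_one v"
proof -
  interpret K: kernel nr nc A by unfold_locales (rule A)
  obtain B where B: "finite B" "K.basis B" using kernel_basis_exists[OF A] by blast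
  with dim have "card B = 1" using K.Ker.dim_basis by simp
  then obtain b where "B = {b}" by (rule card_1_singletonE)
  with B have basis: "K.basis {b}" by simp
  then have b: "b \<in> mat_kernel A" unfolding K.Ker.basis_def by simp
  have multiple: "\<exists>c. w = c \<cdot>\<^sub>v b" if "w \<in> mat_kernel A" for w
  proof -
    from K.Ker.finite_in_span[of "{b}" w] basis that b
    obtain a where "K.lincomb a {b} = w" unfolding K.Ker.basis_def by auto
    then show ?thesis unfolding K.Ker.lincomb_def using b by auto
  qed
  obtain d where d: "v = d \<cdot>\<^sub>v b" using multiple[OF v] by blast
  with v0 b A have "d \<noteq> 0" by (auto simp: mat_kernel_def)
  show ?thesis
  proof
    show "mat_kernel A \<subseteq> span_one v"
    proof
      fix w assume "w \<in> mat_kernel A"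
      then obtain c where "w = c \<cdot>\<^sub>v b" using multiple by blast
      with d \<open>d \<noteq> 0\<close> have "w = (c / d) \<cdot>\<^sub>v v" by (simp add: smult_smult_assoc)
      then show "w \<in> span_one v" unfolding span_one_def by blast
    qed
    show "span_one v \<subseteq> mat_kernel A"
      using mat_kernel_smult[OF A v] unfolding span_one_def by blast
  qed
qed

lemma mat_kernel_stack_incidence_mats:
  fixes n :: nat and Gs :: "(nat \<times> nat) list list"
  defines "Om \<equiv> stack_rows n (map (incidence_mat n) Gs)"
  assumes graphs: "\<forall>Es \<in> set Gs. oriented_simple_graph n Es" and n: "0 < n"
    and rank: "vec_space.rank (dim_row Om) Om = n - 1"
  shows "mat_kernel Om = span_one (ones_vec n)"
proof -
  define nr where "nr = sum_list (map dim_row (map (incidence_mat n) Gs))"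
  have cols: "\<forall>A \<in> set (map (incidence_mat n) Gs). dim_col A = n"
    by simp
  have Om: "Om \<in> carrier_mat nr n"
    unfolding Om_def nr_def by (rule stack_rows_carrier[OF cols])
  have "Om *\<^sub>v ones_vec n = 0\<^sub>v nr"
    unfolding Om_def nr_def using graphs
    by (intro stack_rows_mult_vec_eq_0) (auto simp: incidence_mat_mult_ones)
  then have ones: "ones_vec n \<in> mat_kernel Om"
    by (rule mat_kernelI[OF Om ones_vec_carrier])
  have "kernel_dim Om = 1"
    using rank_plus_kernel_dim[OF Om] rank Om n by simp
  moreover have "ones_vec n \<noteq> 0\<^sub>v n"
    using n by (rule ones_vec_neq_zero)
  ultimately show ?thesis
    by (rule mat_kernel_eq_span_one[OF Om _ ones])
qed

lemma diag_block_incidence_mats_mult_repeat_vec_eq_0_iff: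
  fixes n :: nat and Gs :: "(nat \<times> nat) list list"
  defines "Cs \<equiv> map (incidence_mat n) Gs"
  assumes graphs: "\<forall>Es \<in> set Gs. oriented_simple_graph n Es" and n: "0 < n"
    and rank: "vec_space.rank (dim_row (stack_rows n Cs)) (stack_rows n Cs) = n - 1"
    and y: "y \<in> carrier_vec n"
  shows "diag_block_mat Cs *\<^sub>v repeat_vec (length Gs) y = 0\<^sub>v (sum_list (map dim_row Cs))
    \<longleftrightarrow> y \<in> span_one (ones_vec n)"
proof -
  have cols: "\<forall>A \<in> set Cs. dim_col A = n" by (simp add: Cs_def)
  have Om: "stack_rows n Cs \<in> carrier_mat (sum_list (map dim_row Cs)) n"
    by (rule stack_rows_carrier[OF cols])
  have "length Cs = length Gs" by (simp add: Cs_def)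
  then have "diag_block_mat Cs *\<^sub>v repeat_vec (length Gs) y = stack_rows n Cs *\<^sub>v y"
    using diag_block_mat_mult_repeat_vec[OF cols y] by simp
  moreover have "mat_kernel (stack_rows n Cs) = span_one (ones_vec n)"
    unfolding Cs_def by (rule mat_kernel_stack_incidence_mats[OF graphs n rank[unfolded Cs_def]])
  ultimately show ?thesis
    using mat_kernel[OF Om] y by auto
qed

lemma smult_mat_mult_vec:
  fixes B :: "'a::comm_semiring_0 mat"
  assumes "B \<in> carrier_mat nr nc" and "x \<in> carrier_vec nc"
  shows "(k \<cdot>\<^sub>m B) *\<^sub>v x = k \<cdot>\<^sub>v (B *\<^sub>v x)"
  using assms by (intro eq_vecI) (auto simp: scalar_prod_def sum_distrib_left ac_simps)

lemma gram_sum_mult_vec: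
  fixes B C :: "'a::comm_ring_1 mat"
  assumes B: "B \<in> carrier_mat p N" and C: "C \<in> carrier_mat q N" and x: "x \<in> carrier_vec N"
  shows "(\<mu> \<cdot>\<^sub>m (B\<^sup>T * B) + C\<^sup>T * C) *\<^sub>v x
    = \<mu> \<cdot>\<^sub>v (B\<^sup>T *\<^sub>v (B *\<^sub>v x)) + C\<^sup>T *\<^sub>v (C *\<^sub>v x)"
  using B C x by (simp add: add_mult_distrib_mat_vec[of _ N N] smult_mat_mult_vec[of _ N N])

lemma scalar_prod_transpose_mult_vec:
  fixes B :: "'a::comm_semiring_0 mat"
  assumes B: "B \<in> carrier_mat p N" and x: "x \<in> carrier_vec N" and w: "w \<in> carrier_vec p"
  shows "x \<bullet> (B\<^sup>T *\<^sub>v w) = (B *\<^sub>v x) \<bullet> w"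
  using B x w
  by (simp add: comm_scalar_prod[of x N] comm_scalar_prod[of _ p w] transpose_vec_mult_scalar)

lemma transpose_gram_sum:
  fixes B C :: "'a::comm_ring_1 mat"
  assumes B: "B \<in> carrier_mat p N" and C: "C \<in> carrier_mat q N"
  shows "(\<mu> \<cdot>\<^sub>m (B\<^sup>T * B) + C\<^sup>T * C)\<^sup>T = \<mu> \<cdot>\<^sub>m (B\<^sup>T * B) + C\<^sup>T * C"
proof -
  have "(B\<^sup>T * B)\<^sup>T = B\<^sup>T * B" and "(C\<^sup>T * C)\<^sup>T = C\<^sup>T * C"
    using B C by (simp_all add: transpose_mult[of _ N])
  moreover have "(\<mu> \<cdot>\<^sub>m (B\<^sup>T * B))\<^sup>T = \<mu> \<cdot>\<^sub>m (B\<^sup>T * B)\<^sup>T"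
    by (intro eq_matI) auto
  ultimately show ?thesis
    using B C by (simp add: transpose_add[of _ N N])
qed

lemma mat_kernel_gram_sum:
  fixes B C :: "real mat" and \<mu> :: real
  assumes \<mu>: "0 < \<mu>" and B: "B \<in> carrier_mat p N" and C: "C \<in> carrier_mat q N"
  shows "mat_kernel (\<mu> \<cdot>\<^sub>m (B\<^sup>T * B) + C\<^sup>T * C)
    = {x \<in> carrier_vec N. B *\<^sub>v x = 0\<^sub>v p \<and> C *\<^sub>v x = 0\<^sub>v q}"
proof -
  have A: "\<mu> \<cdot>\<^sub>m (B\<^sup>T * B) + C\<^sup>T * C \<in> carrier_mat N N" using B C by simp
  show ?thesis
  proof (intro equalityI subsetI)
    fix x assume "x \<in> mat_kernel (\<mu> \<cdot>\<^sub>m (B\<^sup>T * B) + C\<^sup>T * C)"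
    with A have x: "x \<in> carrier_vec N" and "(\<mu> \<cdot>\<^sub>m (B\<^sup>T * B) + C\<^sup>T * C) *\<^sub>v x = 0\<^sub>v N"
      by (auto simp: mat_kernel_def)
    then have "0 = x \<bullet> (\<mu> \<cdot>\<^sub>v (B\<^sup>T *\<^sub>v (B *\<^sub>v x)) + C\<^sup>T *\<^sub>v (C *\<^sub>v x))"
      by (simp add: gram_sum_mult_vec[OF B C x])
    also have "\<dots> = \<mu> * ((B *\<^sub>v x) \<bullet> (B *\<^sub>v x)) + (C *\<^sub>v x) \<bullet> (C *\<^sub>v x)"
      using B C x by (simp add: scalar_prod_add_distrib[of _ N] scalar_prod_transpose_mult_vec)
    finally have "(B *\<^sub>v x) \<bullet> (B *\<^sub>v x) = 0 \<and> (C *\<^sub>v x) \<bullet> (C *\<^sub>v x) = 0"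
      using \<mu> conjugate_square_ge_0_vec[of "B *\<^sub>v x"] conjugate_square_ge_0_vec[of "C *\<^sub>v x"]
      by (simp add: add_nonneg_eq_0_iff)
    then show "x \<in> {x \<in> carrier_vec N. B *\<^sub>v x = 0\<^sub>v p \<and> C *\<^sub>v x = 0\<^sub>v q}"
      using x B C conjugate_square_eq_0_vec[of "B *\<^sub>v x" p] conjugate_square_eq_0_vec[of "C *\<^sub>v x" q]
      by simp
  next
    fix x assume "x \<in> {x \<in> carrier_vec N. B *\<^sub>v x = 0\<^sub>v p \<and> C *\<^sub>v x = 0\<^sub>v q}"
    with B C show "x \<in> mat_kernel (\<mu> \<cdot>\<^sub>m (B\<^sup>T * B) + C\<^sup>T * C)"
      by (auto intro!: mat_kernelI[OF A] eq_vecI simp: gram_sum_mult_vec)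
  qed
qed

lemma col_space_subset_orthogonal:
  assumes P: "P \<in> carrier_mat r c" and v: "v \<in> carrier_vec r" and Pv: "P\<^sup>T *\<^sub>v v = 0\<^sub>v c"
  shows "col_space P \<subseteq> {w \<in> carrier_vec r. v \<bullet> w = 0}"
proof
  fix w assume "w \<in> col_space P"
  then obtain z where z: "z \<in> carrier_vec c" and w: "w = P *\<^sub>v z"
    using P unfolding col_space_def by auto
  have "v \<bullet> w = (P\<^sup>T *\<^sub>v v) \<bullet> z"
    unfolding w by (rule transpose_vec_mult_scalar[OF P z v, symmetric])
  with Pv z P w show "w \<in> {w \<in> carrier_vec r. v \<bullet> w = 0}" by simp
qed

lemma mult_mat_vec_surj_of_inj:
  fixes A :: "'a::field mat"
  assumes A: "A \<in> carrier_mat N N"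
    and inj: "\<And>x. x \<in> carrier_vec N \<Longrightarrow> A *\<^sub>v x = 0\<^sub>v N \<Longrightarrow> x = 0\<^sub>v N"
    and w: "w \<in> carrier_vec N"
  obtains x where "x \<in> carrier_vec N" and "A *\<^sub>v x = w"
proof -
  have "det A \<noteq> 0" using det_0_iff_vec_prod_zero[OF A] inj by blast
  from det_non_zero_imp_unit[OF A this, unfolded Units_def, of "()"]
  obtain B where B: "B \<in> carrier_mat N N" and AB: "A * B = 1\<^sub>m N"
    by (auto simp: ring_mat_def)
  have "A *\<^sub>v (B *\<^sub>v w) = (A * B) *\<^sub>v w" using A B w by simp
  with AB w have "A *\<^sub>v (B *\<^sub>v w) = w" by simp
  with B w show thesis by (intro that[of "B *\<^sub>v w"]) simp_all
qed

text \<open>For symmetric \<open>A\<close> with kernel spanned by \<open>v\<close>, the matrix \<open>A + v v\<^sup>T\<close> is invertible and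
  agrees with \<open>A\<close> on the orthogonal complement of \<open>v\<close>.\<close>

lemma orthogonal_subset_col_space:
  fixes A :: "real mat"
  assumes A: "A \<in> carrier_mat N N" and sym: "A\<^sup>T = A"
    and v: "v \<in> carrier_vec N" and v0: "v \<noteq> 0\<^sub>v N" and ker: "mat_kernel A = span_one v"
  shows "{w \<in> carrier_vec N. v \<bullet> w = 0} \<subseteq> col_space A"
proof
  fix w assume "w \<in> {w \<in> carrier_vec N. v \<bullet> w = 0}"
  then have w: "w \<in> carrier_vec N" and vw: "v \<bullet> w = 0" by auto
  define J where "J = mat N N (\<lambda>(i, j). v $ i * v $ j)"
  have J: "J \<in> carrier_mat N N" unfolding J_def by simp
  have "v \<in> mat_kernel A"
    unfolding ker by (rule span_one_self)
  then have Av: "A *\<^sub>v v = 0\<^sub>v N" using A by (simp add: mat_kernel_def)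
  have vv: "v \<bullet> v \<noteq> 0"
    using conjugate_square_eq_0_vec[OF v] v0 by simp
  have AJ: "(A + J) *\<^sub>v x = A *\<^sub>v x + (v \<bullet> x) \<cdot>\<^sub>v v" if x: "x \<in> carrier_vec N" for x
  proof -
    have "J *\<^sub>v x = (v \<bullet> x) \<cdot>\<^sub>v v"
      using v x by (intro eq_vecI) (auto simp: J_def scalar_prod_def sum_distrib_left ac_simps)
    then show ?thesis using A J x by (simp add: add_mult_distrib_mat_vec)
  qed
  have AJ_orth: "(A + J) *\<^sub>v x = A *\<^sub>v x" if x: "x \<in> carrier_vec N" and "v \<bullet> x = 0" for x
    using A v x that(2) by (auto simp: AJ intro!: eq_vecI)
  have vAJ: "v \<bullet> ((A + J) *\<^sub>v x) = (v \<bullet> x) * (v \<bullet> v)" if x: "x \<in> carrier_vec N" for x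
  proof -
    have "v \<bullet> (A *\<^sub>v x) = (A\<^sup>T *\<^sub>v v) \<bullet> x"
      by (rule transpose_vec_mult_scalar[OF A x v, symmetric])
    then have "v \<bullet> (A *\<^sub>v x) = 0" using sym Av x by simp
    then show ?thesis using A v x by (simp add: AJ scalar_prod_add_distrib[of _ N])
  qed
  have inj: "x = 0\<^sub>v N" if x: "x \<in> carrier_vec N" and AJx: "(A + J) *\<^sub>v x = 0\<^sub>v N" for x
  proof -
    have vx: "v \<bullet> x = 0" using vAJ[OF x] AJx v vv by simp
    then have "x \<in> mat_kernel A" using AJ_orth[OF x] AJx A x by (auto intro: mat_kernelI)
    then obtain c where c: "x = c \<cdot>\<^sub>v v" using ker unfolding span_one_def by blast
    with vx v vv have "c = 0" by simp
    with c v show ?thesis by auto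
  qed
  obtain x where x: "x \<in> carrier_vec N" and AJx: "(A + J) *\<^sub>v x = w"
    using mult_mat_vec_surj_of_inj[of "A + J" N w] A J inj w by auto
  have "v \<bullet> x = 0" using vAJ[OF x] AJx vw vv by simp
  then have "A *\<^sub>v x = w" using AJ_orth[OF x] AJx by simp
  with x A show "w \<in> col_space A" unfolding col_space_def by auto
qed

lemma transpose_mult_ones_vec:
  assumes "P \<in> carrier_mat r c"
  shows "P\<^sup>T *\<^sub>v ones_vec r = vec c (\<lambda>j. \<Sum>i<r. P $$ (i, j))"
  using assms by (intro eq_vecI) (auto simp: ones_vec_def scalar_prod_def atLeast0LessThan)

lemma kron_one_mat_col_sum:
  fixes B :: "'a::semiring_1 mat"
  assumes B: "B \<in> carrier_mat p q" and j: "j < T * q"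
  shows "(\<Sum>i<T * p. kron (1\<^sub>m T) B $$ (i, j)) = (\<Sum>k<p. B $$ (k, j mod q))"
proof -
  have "0 < T * q" using j by linarith
  with j have jdiv: "j div q < T" and jmod: "j mod q < q"
    by (auto simp: less_mult_imp_div_less)
  have "(\<Sum>i<T * p. kron (1\<^sub>m T) B $$ (i, j)) = (\<Sum>s<T. \<Sum>k<p. kron (1\<^sub>m T) B $$ (s * p + k, j))"
    by (rule sum_lessThan_mult_blocks)
  also have "\<dots> = (\<Sum>s<T. if s = j div q then \<Sum>k<p. B $$ (k, j mod q) else 0)"
  proof (intro sum.cong refl)
    fix s assume "s \<in> {..<T}"
    then show "(\<Sum>k<p. kron (1\<^sub>m T) B $$ (s * p + k, j))
        = (if s = j div q then \<Sum>k<p. B $$ (k, j mod q) else 0)"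
      using B j jdiv jmod block_index_less[of s T _ p] by (auto simp: kron_def)
  qed
  also have "\<dots> = (\<Sum>k<p. B $$ (k, j mod q))"
    using jdiv by simp
  finally show ?thesis .
qed

lemma centering_mat_col_sum:
  assumes "0 < n" and "j < n"
  shows "(\<Sum>k<n. (1\<^sub>m n - (1 / real n) \<cdot>\<^sub>m ones_mat n) $$ (k, j)) = 0"
proof -
  have "(\<Sum>k<n. (1\<^sub>m n - (1 / real n) \<cdot>\<^sub>m ones_mat n) $$ (k, j))
      = (\<Sum>k<n. (if k = j then 1 else 0) - 1 / real n)"
    using assms by (intro sum.cong) (auto simp: ones_mat_def)
  also have "\<dots> = 0"
    using assms by (simp add: sum_subtractf)
  finally show ?thesis .
qed

lemma col_space_kron_centering_mat:
  assumes "0 < n"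
  shows "col_space (kron (1\<^sub>m T) (1\<^sub>m n - (1 / real n) \<cdot>\<^sub>m ones_mat n))
    \<subseteq> {w \<in> carrier_vec (T * n). ones_vec (T * n) \<bullet> w = 0}"
proof (rule col_space_subset_orthogonal)
  let ?B = "1\<^sub>m n - (1 / real n) \<cdot>\<^sub>m ones_mat n"
  have B: "?B \<in> carrier_mat n n" by (intro minus_carrier_mat smult_carrier_mat ones_mat_carrier)
  then show P: "kron (1\<^sub>m T) ?B \<in> carrier_mat (T * n) (T * n)"
    by (intro carrier_matI) (simp_all add: ones_mat_def)
  show "(kron (1\<^sub>m T) ?B)\<^sup>T *\<^sub>v ones_vec (T * n) = 0\<^sub>v (T * n)"
    using kron_one_mat_col_sum[OF B] centering_mat_col_sum[OF assms mod_less_divisor[OF assms]]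
    by (auto simp: transpose_mult_ones_vec[OF P] intro!: eq_vecI)
qed (simp add: ones_vec_def)

lemma mat_kernel_incidence_gram_sum:
  fixes n T :: nat and Es :: "(nat \<times> nat) list" and Et :: "nat \<Rightarrow> (nat \<times> nat) list" and \<mu> :: real
  defines "M \<equiv> kron (incidence_mat T Es) (1\<^sub>m n)"
    and "Cs \<equiv> map (\<lambda>t. incidence_mat n (Et t)) [0..<T]"
  assumes n: "0 < n" and \<mu>: "0 < \<mu>"
    and G: "oriented_simple_graph T Es" and conn: "graph_connected T Es"
    and Gt: "\<forall>t<T. oriented_simple_graph n (Et t)"
    and rank: "vec_space.rank (dim_row (stack_rows n Cs)) (stack_rows n Cs) = n - 1"
  shows "mat_kernel (\<mu> \<cdot>\<^sub>m (M\<^sup>T * M) + (diag_block_mat Cs)\<^sup>T * diag_block_mat Cs)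
    = span_one (ones_vec (T * n))"
proof -
  define C where "C = diag_block_mat Cs"
  define r where "r = sum_list (map dim_row Cs)"
  have cols: "\<forall>A \<in> set Cs. dim_col A = n" by (simp add: Cs_def)
  have M: "M \<in> carrier_mat (length Es * n) (T * n)"
    unfolding M_def by (intro carrier_matI) simp_all
  have "length Cs = T" by (simp add: Cs_def)
  then have C: "C \<in> carrier_mat r (T * n)"
    unfolding C_def r_def
    by (intro carrier_matI) (simp_all add: dim_diag_block_mat(1) dim_col_diag_block_mat[OF cols])
  have A: "\<mu> \<cdot>\<^sub>m (M\<^sup>T * M) + C\<^sup>T * C \<in> carrier_mat (T * n) (T * n)"
    using M C by simp
  have C_repeat: "C *\<^sub>v repeat_vec T y = 0\<^sub>v r \<longleftrightarrow> y \<in> span_one (ones_vec n)"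
    if "y \<in> carrier_vec n" for y
    using diag_block_incidence_mats_mult_repeat_vec_eq_0_iff[of "map Et [0..<T]" n y] Gt n rank that
    by (simp add: C_def r_def Cs_def o_def)
  have ker_A: "mat_kernel (\<mu> \<cdot>\<^sub>m (M\<^sup>T * M) + C\<^sup>T * C)
      = {x \<in> carrier_vec (T * n). M *\<^sub>v x = 0\<^sub>v (length Es * n) \<and> C *\<^sub>v x = 0\<^sub>v r}"
    by (rule mat_kernel_gram_sum[OF \<mu> M C])
  have "ones_vec (T * n) \<in> mat_kernel (\<mu> \<cdot>\<^sub>m (M\<^sup>T * M) + C\<^sup>T * C)"
    using kron_incidence_mat_mult_ones[OF G, of n] C_repeat[OF ones_vec_carrier] span_one_self
    unfolding ker_A by (simp add: M_def repeat_vec_ones)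
  then have "span_one (ones_vec (T * n)) \<subseteq> mat_kernel (\<mu> \<cdot>\<^sub>m (M\<^sup>T * M) + C\<^sup>T * C)"
    using mat_kernel_smult[OF A] unfolding span_one_def by blast
  moreover have "mat_kernel (\<mu> \<cdot>\<^sub>m (M\<^sup>T * M) + C\<^sup>T * C) \<subseteq> span_one (ones_vec (T * n))"
  proof
    fix x assume "x \<in> mat_kernel (\<mu> \<cdot>\<^sub>m (M\<^sup>T * M) + C\<^sup>T * C)"
    then have x: "x \<in> carrier_vec (T * n)" and Mx: "M *\<^sub>v x = 0\<^sub>v (length Es * n)"
      and Cx: "C *\<^sub>v x = 0\<^sub>v r"
      unfolding ker_A by auto
    define y where "y = vec n (\<lambda>k. x $ k)"
    have y: "y \<in> carrier_vec n" unfolding y_def by simp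
    have xy: "x = repeat_vec T y"
      unfolding y_def using Mx unfolding M_def by (rule kron_incidence_mat_kernel[OF G conn x])
    with Cx C_repeat[OF y] obtain c where "y = c \<cdot>\<^sub>v ones_vec n"
      unfolding span_one_def by auto
    then show "x \<in> span_one (ones_vec (T * n))"
      unfolding span_one_def xy by (auto simp: repeat_vec_smult repeat_vec_ones)
  qed
  ultimately show ?thesis
    unfolding C_def[symmetric] by blast
qed

theorem proposition3:
  fixes n T :: nat and Es :: "(nat \<times> nat) list" and Et :: "nat \<Rightarrow> (nat \<times> nat) list"
    and \<mu> :: real
  assumes "n \<ge> 2" and "T \<ge> 2"
    and "oriented_simple_graph T Es" and "graph_connected T Es"
    and "\<forall>t<T. oriented_simple_graph n (Et t)"
    and "\<mu> > 0"
    and "vec_space.rank (dim_row (stack_rows n (map (\<lambda>t. incidence_mat n (Et t)) [0..<T])))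
           (stack_rows n (map (\<lambda>t. incidence_mat n (Et t)) [0..<T])) = n - 1"
  shows "let D = incidence_mat T Es; M = kron D (1\<^sub>m n);
             C = diag_block_mat (map (\<lambda>t. incidence_mat n (Et t)) [0..<T]);
             A = \<mu> \<cdot>\<^sub>m (transpose_mat M * M) + transpose_mat C * C;
             P = kron (1\<^sub>m T) (1\<^sub>m n - (1 / real n) \<cdot>\<^sub>m ones_mat n)
         in mat_kernel A = span_one (ones_vec (n * T)) \<and> col_space P \<subseteq> col_space A"
proof -
  define M where "M = kron (incidence_mat T Es) (1\<^sub>m n)"
  define C where "C = diag_block_mat (map (\<lambda>t. incidence_mat n (Et t)) [0..<T])"
  define A where "A = \<mu> \<cdot>\<^sub>m (M\<^sup>T * M) + C\<^sup>T * C"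
  have n: "0 < n" using assms(1) by simp
  have ker: "mat_kernel A = span_one (ones_vec (T * n))"
    unfolding A_def M_def C_def using assms n by (intro mat_kernel_incidence_gram_sum) simp_all
  have M: "M \<in> carrier_mat (length Es * n) (T * n)"
    unfolding M_def by (intro carrier_matI) simp_all
  have "dim_col C = T * n"
    unfolding C_def by (subst dim_col_diag_block_mat[of _ n]) simp_all
  then obtain r where C: "C \<in> carrier_mat r (T * n)" by blast
  have A: "A \<in> carrier_mat (T * n) (T * n)" unfolding A_def using M C by simp
  have ones: "ones_vec (T * n) \<noteq> 0\<^sub>v (T * n)"
    using n assms(2) by (intro ones_vec_neq_zero) simp
  have "col_space (kron (1\<^sub>m T) (1\<^sub>m n - (1 / real n) \<cdot>\<^sub>m ones_mat n))
      \<subseteq> {w \<in> carrier_vec (T * n). ones_vec (T * n) \<bullet> w = 0}"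
    by (rule col_space_kron_centering_mat[OF n])
  also have "\<dots> \<subseteq> col_space A"
    by (intro orthogonal_subset_col_space[OF A _ _ ones ker])
      (simp_all add: A_def transpose_gram_sum[OF M C])
  finally show ?thesis
    using ker by (simp add: Let_def A_def M_def C_def mult.commute)
qed

end
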